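(* Let $R$ be a generalized p.q.-Baer $*$-ring. Then for every $x\in R$ there exists $n\in\mathbb N$ such that $r_R((xR)^n)\cap (x^* )^nR=\{0\}$.
   Context: A $*$-ring is a ring with an involution; a projection is $e$ with $e=e^*=e^2$. $r_R(S)=\{a\in R: sa=0\ \forall s\in S\}$. A $*$-ring $R$ is a generalized p.q.-Baer $*$-ring if for every principal ideal $I$ of $R$ there exist a positive integer $n$ and a projection $e\in R$ with $r_R(I^n)=eR$; in the paper this is used in the form: for every $x\in R$ there are $n\in\mathbb N$ and a projection $e$ with $r_R((xR)^n)=eR$. Such a ring has a unity. *)

theory Defs
  imports Main
begin

definition involution :: "('a::ring_1 \<Rightarrow> 'a) \<Rightarrow> bool" where
  "involution s \<longleftrightarrow> (\<forall>a b. s (a + b) = s a + s b) \<and> (\<forall>a b. s (a * b) = s b * s a)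
     \<and> (\<forall>a. s (s a) = a)"

definition projection :: "('a::ring_1 \<Rightarrow> 'a) \<Rightarrow> 'a \<Rightarrow> bool" where
  "projection s e \<longleftrightarrow> e = s e \<and> e * e = e"

definition r_ann :: "'a::ring_1 set \<Rightarrow> 'a set" where
  "r_ann S = {a. \<forall>t\<in>S. t * a = 0}"

definition set_mult :: "'a::ring_1 set \<Rightarrow> 'a set \<Rightarrow> 'a set" where
  "set_mult A B = {a * b | a b. a \<in> A \<and> b \<in> B}"

fun set_pow :: "'a::ring_1 set \<Rightarrow> nat \<Rightarrow> 'a set" where
  "set_pow A 0 = {1}"
| "set_pow A (Suc n) = set_mult A (set_pow A n)"

definition ideal_pow :: "'a::ring_1 set \<Rightarrow> nat \<Rightarrow> 'a set" where
  "ideal_pow I n = {sum_list xs | xs. set xs \<subseteq> set_pow I n}"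

definition rprinc :: "'a::ring_1 \<Rightarrow> 'a set" where
  "rprinc x = {x * r | r. True}"

definition gen_pq_baer :: "('a::ring_1 \<Rightarrow> 'a) \<Rightarrow> bool" where
  "gen_pq_baer s \<longleftrightarrow> involution s \<and>
     (\<forall>x. \<exists>n\<ge>1. \<exists>e. projection s e \<and> r_ann (ideal_pow (rprinc x) n) = rprinc e)"

end

theory Submission
  imports Defs
begin

(* If r(I) = eR for a projection e and y \<in> I, then y e = 0, hence e s(y) = s(y e) = 0; an element
   a of eR \<inter> s(y)R is then a = e a \<in> e s(y) R = {0}. Apply this to y = x^n \<in> (xR)^n and use
   s(x^n) = s(x)^n. *)

lemma involution_zero:
  assumes "involution s"
  shows "s 0 = 0"
proof -
  have "s (0 + 0) = s 0 + s 0"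
    using assms unfolding involution_def by blast
  then show ?thesis by simp
qed

lemma involution_one:
  assumes "involution s"
  shows "s 1 = 1"
proof -
  have "s 1 = s 1 * s (s 1)"
    using assms unfolding involution_def by simp
  also have "\<dots> = s (s 1 * 1)"
    using assms unfolding involution_def by metis
  also have "\<dots> = 1"
    using assms unfolding involution_def by simp
  finally show ?thesis .
qed

lemma involution_power:
  assumes "involution s"
  shows "s (x ^ n) = s x ^ n"
proof (induction n)
  case 0
  show ?case using involution_one[OF assms] by simp
next
  case (Suc n)
  have "s (x ^ Suc n) = s (x ^ n) * s x"
    using assms unfolding involution_def by (metis power_Suc)
  then show ?case using Suc by (simp add: power_commutes)
qed

lemma rprinc_self: "x \<in> rprinc x"
  unfolding rprinc_def by (metis (mono_tags) mem_Collect_eq mult.right_neutral)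

lemma power_in_set_pow_rprinc: "x ^ n \<in> set_pow (rprinc x) n"
proof (induction n)
  case 0
  then show ?case by simp
next
  case (Suc n)
  then show ?case
    using rprinc_self[of x] unfolding set_pow.simps power_Suc set_mult_def by blast
qed

lemma power_in_ideal_pow_rprinc: "x ^ n \<in> ideal_pow (rprinc x) n"
  unfolding ideal_pow_def
  using power_in_set_pow_rprinc[of x n] by (intro CollectI exI[of _ "[x ^ n]"]) simp

lemma projection_left_mult_rprinc:
  assumes "projection s e" and "a \<in> rprinc e"
  shows "e * a = a"
proof -
  obtain r where "a = e * r"
    using assms(2) unfolding rprinc_def by blast
  then show ?thesis
    using assms(1) unfolding projection_def by (metis mult.assoc)
qed

lemma r_ann_projection_inter_rprinc_adjoint:
  assumes inv: "involution s" and e: "projection s e"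
    and ann: "r_ann I = rprinc e" and "y \<in> I"
  shows "r_ann I \<inter> rprinc (s y) = {0}"
proof -
  have "y * e = 0"
    using ann rprinc_self[of e] \<open>y \<in> I\<close> unfolding r_ann_def by blast
  then have "s e * s y = 0"
    using inv involution_zero[OF inv] unfolding involution_def by metis
  then have e_adj_y: "e * s y = 0"
    using e unfolding projection_def by simp
  have "a = 0" if "a \<in> r_ann I" and "a \<in> rprinc (s y)" for a
  proof -
    obtain r where r: "a = s y * r"
      using \<open>a \<in> rprinc (s y)\<close> unfolding rprinc_def by blast
    have "a = e * a"
      using projection_left_mult_rprinc[OF e] ann \<open>a \<in> r_ann I\<close> by simp
    also have "\<dots> = e * s y * r"
      using r by (simp add: mult.assoc)
    finally show "a = 0"
      using e_adj_y by simp
  qed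
  moreover have "0 \<in> r_ann I \<inter> rprinc (s y)"
    unfolding r_ann_def rprinc_def by (auto intro: exI[of _ 0])
  ultimately show ?thesis by blast
qed

theorem mainTheorem3:
  fixes s :: "'a::ring_1 \<Rightarrow> 'a"
  assumes "gen_pq_baer s"
  shows "\<forall>x. \<exists>n\<ge>1. r_ann (ideal_pow (rprinc x) n) \<inter> rprinc (s x ^ n) = {0}"
proof
  fix x
  have inv: "involution s"
    using assms unfolding gen_pq_baer_def by blast
  obtain n e where "n \<ge> 1" and e: "projection s e"
    and ann: "r_ann (ideal_pow (rprinc x) n) = rprinc e"
    using assms unfolding gen_pq_baer_def by blast
  have "r_ann (ideal_pow (rprinc x) n) \<inter> rprinc (s (x ^ n)) = {0}"
    using r_ann_projection_inter_rprinc_adjoint[OF inv e ann power_in_ideal_pow_rprinc] .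
  then show "\<exists>n\<ge>1. r_ann (ideal_pow (rprinc x) n) \<inter> rprinc (s x ^ n) = {0}"
    using \<open>n \<ge> 1\<close> involution_power[OF inv] by metis
qed

end
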